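(* In the $\ell^1$ linear social choice setting, random dictatorship $f_{\mathrm{RD}}$ satisfies $\mathrm{D}(f_{\mathrm{RD}})=\Omega(d)$ and $\mathrm{D}(f_{\mathrm{RD}})=O(d^3)$.
   Context: Setting ($\ell^1$ linear social choice). Fix a dimension $d\ge 1$ and let $\Delta_d=\{x\in\mathbb{R}^d_{\ge 0}:\sum_i x^i=1\}$. An instance consists of a finite set $V$ of $n$ voters and a finite set $C$ of $m$ candidates, each a vector in $\Delta_d$, with every voter vector in $\mathrm{Cone}(C)$ (nonnegative linear combinations of candidate vectors). Utility: $u_v(c)=v^\top c$. Each voter reports a ranking of $C$ consistent with its utilities (ties broken arbitrarily). $\mathrm{UW}(c)=\sum_{v\in V}u_v(c)$. A randomized voting rule outputs a distribution over $C$ from the profile only. Distortion on an instance: $\max_c\mathrm{UW}(c)/\mathbb{E}_{c\sim f}[\mathrm{UW}(c)]$; $\mathrm{D}(f)$ is the supremum over all instances, as a function of $d$. Random dictatorship $f_{\mathrm{RD}}$: pick a voter uniformly at random and output that voter's top-ranked candidate. *)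

theory Defs
  imports "HOL-Probability.Probability"
begin

text \<open>Vectors in R^d are represented as functions nat => real; only coordinates i < d
  are meaningful, and points of the in_simplex are required to vanish outside {0..<d}
  so that the representation is canonical.\<close>

definition in_simplex :: "nat \<Rightarrow> (nat \<Rightarrow> real) \<Rightarrow> bool" where
  "in_simplex d x \<longleftrightarrow> (\<forall>i<d. 0 \<le> x i) \<and> (\<forall>i\<ge>d. x i = 0) \<and> (\<Sum>i<d. x i) = 1"

definition ip :: "nat \<Rightarrow> (nat \<Rightarrow> real) \<Rightarrow> (nat \<Rightarrow> real) \<Rightarrow> real" where
  "ip d x y = (\<Sum>i<d. x i * y i)"

definition in_cone :: "nat \<Rightarrow> (nat \<Rightarrow> real) set \<Rightarrow> (nat \<Rightarrow> real) \<Rightarrow> bool" where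
  "in_cone d C v \<longleftrightarrow> (\<exists>l. (\<forall>c\<in>C. 0 \<le> l c) \<and> (\<forall>i<d. v i = (\<Sum>c\<in>C. l c * c i)))"

definition consistent_ranking ::
  "nat \<Rightarrow> (nat \<Rightarrow> real) \<Rightarrow> (nat \<Rightarrow> real) set \<Rightarrow> (nat \<Rightarrow> real) list \<Rightarrow> bool" where
  "consistent_ranking d v C r \<longleftrightarrow>
     distinct r \<and> set r = C \<and> sorted_wrt (\<lambda>a b. ip d v b \<le> ip d v a) r"

definition valid_instance ::
  "nat \<Rightarrow> nat set \<Rightarrow> (nat \<Rightarrow> nat \<Rightarrow> real) \<Rightarrow> (nat \<Rightarrow> real) set
     \<Rightarrow> (nat \<Rightarrow> (nat \<Rightarrow> real) list) \<Rightarrow> bool" where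
  "valid_instance d V vote C rk \<longleftrightarrow>
     finite V \<and> V \<noteq> {} \<and> finite C \<and> C \<noteq> {} \<and> (\<forall>c\<in>C. in_simplex d c) \<and>
     (\<forall>v\<in>V. in_simplex d (vote v) \<and> in_cone d C (vote v) \<and>
              consistent_ranking d (vote v) C (rk v))"

definition UW :: "nat \<Rightarrow> nat set \<Rightarrow> (nat \<Rightarrow> nat \<Rightarrow> real) \<Rightarrow> (nat \<Rightarrow> real) \<Rightarrow> real" where
  "UW d V vote c = (\<Sum>v\<in>V. ip d (vote v) c)"

definition f_RD :: "nat set \<Rightarrow> (nat \<Rightarrow> (nat \<Rightarrow> real) list) \<Rightarrow> (nat \<Rightarrow> real) pmf" where
  "f_RD V rk = map_pmf (\<lambda>v. hd (rk v)) (pmf_of_set V)"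

definition distortion ::
  "nat \<Rightarrow> nat set \<Rightarrow> (nat \<Rightarrow> nat \<Rightarrow> real) \<Rightarrow> (nat \<Rightarrow> real) set \<Rightarrow> (nat \<Rightarrow> real) pmf \<Rightarrow> real" where
  "distortion d V vote C p =
     (MAX c\<in>C. UW d V vote c) / measure_pmf.expectation p (UW d V vote)"

definition D_RD :: "nat \<Rightarrow> ereal" where
  "D_RD d = (SUP I \<in> {(V, vote, C, rk). valid_instance d V vote C rk}.
               (case I of (V, vote, C, rk) \<Rightarrow> ereal (distortion d V vote C (f_RD V rk))))"

end

theory Submission
  imports Defs
begin

text \<open>
  Let \<open>t\<^sub>v\<close> be the top candidate of voter \<open>v\<close> and \<open>W = \<Sum>\<^sub>v u\<^sub>v(t\<^sub>v)\<close>;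
  the optimal welfare is at most \<open>W\<close>. Writing \<open>v = \<Sum>\<^sub>c \<lambda>\<^sub>c c\<close>, comparing coordinate sums
  gives \<open>\<Sum>\<^sub>c \<lambda>\<^sub>c = 1\<close>, so \<open>u\<^sub>v(t\<^sub>v) \<ge> v\<^sup>T v \<ge> 1/d\<close> and \<open>W \<ge> n/d\<close>. In coordinate \<open>k\<close>,
  \<open>a\<^sub>k = \<Sum>\<^sub>v v\<^sub>k t\<^sub>v\<^sub>k\<close> is bounded both by \<open>\<Sum>\<^sub>v v\<^sub>k\<close> and by \<open>\<Sum>\<^sub>v t\<^sub>v\<^sub>k\<close>, and these products sum
  over \<open>k\<close> to \<open>n E\<close>, where \<open>E\<close> is the expected welfare of random dictatorship. Cauchy-Schwarz
  gives \<open>W\<^sup>2 \<le> d \<Sum>\<^sub>k a\<^sub>k\<^sup>2 \<le> d n E\<close>, hence \<open>W \<le> d\<^sup>2 E\<close>: the distortion is even \<open>O(d\<^sup>2)\<close>.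

  Take the unit vectors \<open>e\<^sub>0, \<dots>, e\<^sub>d\<^sub>-\<^sub>1\<close> as candidates and, for \<open>1 \<le> j < d\<close>,
  a voter \<open>(e\<^sub>0 + e\<^sub>j)/2\<close> who breaks the tie between \<open>e\<^sub>0\<close> and \<open>e\<^sub>j\<close> in favour of \<open>e\<^sub>j\<close>.
  Random dictatorship then has expected welfare \<open>1/2\<close>, while \<open>e\<^sub>0\<close> has welfare \<open>(d - 1)/2\<close>.
\<close>

lemma in_simplex_nonneg: "in_simplex d x \<Longrightarrow> i < d \<Longrightarrow> 0 \<le> x i"
  unfolding in_simplex_def by auto

lemma in_simplex_le_one:
  assumes "in_simplex d x" "i < d"
  shows "x i \<le> 1"
proof -
  have "x i \<le> (\<Sum>j<d. x j)"
    using assms by (intro member_le_sum) (auto simp: in_simplex_def)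
  also have "\<dots> = 1"
    using assms(1) unfolding in_simplex_def by simp
  finally show ?thesis .
qed

lemma in_simplex_dim_pos: "in_simplex d x \<Longrightarrow> 0 < d"
  unfolding in_simplex_def by (cases d) auto

lemma ip_self_ge_inverse_dim:
  assumes "in_simplex d x"
  shows "1 / real d \<le> ip d x x"
proof -
  have "1 = (\<Sum>i<d. x i)\<^sup>2"
    using assms unfolding in_simplex_def by simp
  also have "\<dots> \<le> (\<Sum>i<d. (x i)\<^sup>2) * real d"
    using sum_squared_le_sum_of_squares[of x "{..<d}"] by simp
  also have "(\<Sum>i<d. (x i)\<^sup>2) = ip d x x"
    unfolding ip_def by (simp add: power2_eq_square)
  finally show ?thesis
    using in_simplex_dim_pos[OF assms] by (simp add: field_simps)
qed

lemma ip_self_le_best_candidate: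
  assumes C: "\<forall>c\<in>C. in_simplex d c" and x: "in_simplex d x" "in_cone d C x"
    and best: "\<And>c. c \<in> C \<Longrightarrow> ip d x c \<le> ip d x t"
  shows "ip d x x \<le> ip d x t"
proof -
  obtain l where l_nonneg: "\<forall>c\<in>C. 0 \<le> l c" and x_eq: "\<forall>i<d. x i = (\<Sum>c\<in>C. l c * c i)"
    using x(2) unfolding in_cone_def by auto
  have "(\<Sum>c\<in>C. l c) = (\<Sum>c\<in>C. l c * (\<Sum>i<d. c i))"
    using C unfolding in_simplex_def by (intro sum.cong) auto
  also have "\<dots> = (\<Sum>i<d. \<Sum>c\<in>C. l c * c i)"
    by (simp add: sum_distrib_left sum.swap[of _ C])
  also have "\<dots> = (\<Sum>i<d. x i)"
    using x_eq by (intro sum.cong) auto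
  also have "\<dots> = 1"
    using x(1) unfolding in_simplex_def by simp
  finally have l_sum: "(\<Sum>c\<in>C. l c) = 1" .
  have "ip d x x = (\<Sum>i<d. x i * (\<Sum>c\<in>C. l c * c i))"
    unfolding ip_def using x_eq by (intro sum.cong) auto
  also have "\<dots> = (\<Sum>c\<in>C. l c * ip d x c)"
    unfolding ip_def by (simp add: sum_distrib_left sum_distrib_right mult_ac sum.swap[of _ C])
  also have "\<dots> \<le> (\<Sum>c\<in>C. l c * ip d x t)"
    using l_nonneg best by (intro sum_mono mult_left_mono) auto
  also have "\<dots> = ip d x t"
    using l_sum by (simp flip: sum_distrib_right)
  finally show ?thesis .
qed

lemma consistent_ranking_hd:
  assumes "consistent_ranking d v C r" "c \<in> C"
  shows "hd r \<in> C" "ip d v c \<le> ip d v (hd r)"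
proof -
  have r: "set r = C" "sorted_wrt (\<lambda>a b. ip d v b \<le> ip d v a) r"
    using assms(1) unfolding consistent_ranking_def by auto
  then obtain x xs where "r = x # xs"
    using assms(2) by (cases r) auto
  then show "hd r \<in> C" "ip d v c \<le> ip d v (hd r)"
    using r assms(2) by auto
qed

lemma consistent_ranking_with_hd_exists:
  assumes "finite C" "t \<in> C" "\<And>c. c \<in> C \<Longrightarrow> ip d v c \<le> ip d v t"
  shows "\<exists>r. consistent_ranking d v C r \<and> hd r = t"
proof -
  obtain xs where xs: "set xs = C - {t}" "distinct xs"
    using finite_distinct_list[of "C - {t}"] assms(1) by auto
  define r where "r = t # sort_key (\<lambda>c. - ip d v c) xs"
  have "sorted_wrt (\<lambda>a b. - ip d v a \<le> - ip d v b) (sort_key (\<lambda>c. - ip d v c) xs)"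
    using sorted_sort_key[of "\<lambda>c. - ip d v c" xs] by (simp add: sorted_map)
  then have "consistent_ranking d v C r"
    unfolding consistent_ranking_def r_def using xs assms by auto
  then show ?thesis
    unfolding r_def by auto
qed

lemma expectation_f_RD:
  assumes "finite V" "V \<noteq> {}"
  shows "measure_pmf.expectation (f_RD V rk) g = (\<Sum>v\<in>V. g (hd (rk v))) / real (card V)"
  unfolding f_RD_def using assms by (simp add: integral_pmf_of_set)

lemma sum_UW_eq_sum_coordinate_products:
  "(\<Sum>v\<in>V. UW d V vote (t v)) = (\<Sum>k<d. (\<Sum>w\<in>V. vote w k) * (\<Sum>v\<in>V. t v k))"
proof -
  have "(\<Sum>v\<in>V. UW d V vote (t v)) = (\<Sum>v\<in>V. \<Sum>k<d. \<Sum>w\<in>V. vote w k * t v k)"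
    unfolding UW_def ip_def by (intro sum.cong refl sum.swap)
  also have "\<dots> = (\<Sum>k<d. \<Sum>v\<in>V. \<Sum>w\<in>V. vote w k * t v k)"
    by (rule sum.swap)
  also have "\<dots> = (\<Sum>k<d. \<Sum>w\<in>V. \<Sum>v\<in>V. vote w k * t v k)"
    by (intro sum.cong refl sum.swap)
  also have "\<dots> = (\<Sum>k<d. (\<Sum>w\<in>V. vote w k) * (\<Sum>v\<in>V. t v k))"
    by (simp add: sum_product)
  finally show ?thesis .
qed

lemma squared_top_welfare_le:
  fixes vote t :: "nat \<Rightarrow> nat \<Rightarrow> real"
  assumes vote: "\<And>v i. v \<in> V \<Longrightarrow> i < d \<Longrightarrow> 0 \<le> vote v i \<and> vote v i \<le> 1"
    and t: "\<And>v i. v \<in> V \<Longrightarrow> i < d \<Longrightarrow> 0 \<le> t v i \<and> t v i \<le> 1"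
  shows "(\<Sum>v\<in>V. ip d (vote v) (t v))\<^sup>2 \<le> real d * (\<Sum>v\<in>V. UW d V vote (t v))"
proof -
  define a where "a k = (\<Sum>v\<in>V. vote v k * t v k)" for k
  have a_sq_le: "(a k)\<^sup>2 \<le> (\<Sum>w\<in>V. vote w k) * (\<Sum>v\<in>V. t v k)" if "k < d" for k
  proof -
    have "0 \<le> a k"
      unfolding a_def using vote t that by (intro sum_nonneg) auto
    moreover have "a k \<le> (\<Sum>w\<in>V. vote w k)"
      unfolding a_def using vote t that by (intro sum_mono mult_left_le) auto
    moreover have "a k \<le> (\<Sum>v\<in>V. t v k)"
      unfolding a_def using vote t that by (intro sum_mono mult_left_le_one_le) auto
    ultimately show ?thesis
      by (simp add: power2_eq_square mult_mono)
  qed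
  have "(\<Sum>v\<in>V. ip d (vote v) (t v)) = (\<Sum>k<d. a k)"
    unfolding a_def ip_def by (rule sum.swap)
  then have "(\<Sum>v\<in>V. ip d (vote v) (t v))\<^sup>2 \<le> (\<Sum>k<d. (a k)\<^sup>2) * real d"
    using sum_squared_le_sum_of_squares[of a "{..<d}"] by simp
  also have "\<dots> \<le> (\<Sum>k<d. (\<Sum>w\<in>V. vote w k) * (\<Sum>v\<in>V. t v k)) * real d"
    using a_sq_le by (intro mult_right_mono sum_mono) auto
  also have "\<dots> = real d * (\<Sum>v\<in>V. UW d V vote (t v))"
    by (simp add: sum_UW_eq_sum_coordinate_products)
  finally show ?thesis .
qed

lemma le_sq_mult_of_sq_le:
  fixes n d W E :: real
  assumes "0 < n" "0 < d" "n \<le> d * W" "W\<^sup>2 \<le> d * (n * E)"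
  shows "0 < E" "W \<le> d\<^sup>2 * E"
proof -
  have "0 < d * W"
    using assms(1,3) by linarith
  then have W_pos: "0 < W"
    using assms(2) by (simp add: zero_less_mult_iff)
  then have "0 < W\<^sup>2"
    by simp
  then have "0 < d * (n * E)"
    using assms(4) by linarith
  then show "0 < E"
    using assms(1,2) by (simp add: zero_less_mult_iff)
  have "n * W \<le> d * W\<^sup>2"
    using mult_right_mono[OF assms(3), of W] W_pos by (simp add: power2_eq_square)
  also have "\<dots> \<le> n * (d\<^sup>2 * E)"
    using mult_left_mono[OF assms(4), of d] assms(2) by (simp add: power2_eq_square mult_ac)
  finally show "W \<le> d\<^sup>2 * E"
    using assms(1) by simp
qed

lemma distortion_f_RD_le_dim_squared:
  assumes "valid_instance d V vote C rk"
  shows "distortion d V vote C (f_RD V rk) \<le> real d ^ 2"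
proof -
  have V: "finite V" "V \<noteq> {}" and C: "finite C" "C \<noteq> {}" "\<forall>c\<in>C. in_simplex d c"
    and vote: "\<And>v. v \<in> V \<Longrightarrow>
      in_simplex d (vote v) \<and> in_cone d C (vote v) \<and> consistent_ranking d (vote v) C (rk v)"
    using assms unfolding valid_instance_def by auto
  define t where "t v = hd (rk v)" for v
  define n where "n = real (card V)"
  define W where "W = (\<Sum>v\<in>V. ip d (vote v) (t v))"
  define E where "E = measure_pmf.expectation (f_RD V rk) (UW d V vote)"
  have t_mem: "t v \<in> C" and t_best: "ip d (vote v) c \<le> ip d (vote v) (t v)"
    if "v \<in> V" "c \<in> C" for v c
    using consistent_ranking_hd vote[OF that(1)] that(2) unfolding t_def by auto
  have d_pos: "0 < d"
    using C in_simplex_dim_pos by blast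
  have n_pos: "0 < n"
    using V unfolding n_def by (simp add: card_gt_0_iff)
  have opt_le: "(MAX c\<in>C. UW d V vote c) \<le> W"
    using C t_best unfolding W_def UW_def by (auto intro!: Max.boundedI sum_mono)
  have n_le: "n \<le> real d * W"
  proof -
    have "n / real d = (\<Sum>v\<in>V. 1 / real d)"
      unfolding n_def by simp
    also have "\<dots> \<le> W"
      unfolding W_def using vote C t_best
      by (intro sum_mono order_trans[OF ip_self_ge_inverse_dim ip_self_le_best_candidate]) auto
    finally show ?thesis
      using d_pos by (simp add: field_simps)
  qed
  have W_sq_le: "W\<^sup>2 \<le> real d * (n * E)"
  proof -
    have "W\<^sup>2 \<le> real d * (\<Sum>v\<in>V. UW d V vote (t v))"
      unfolding W_def using vote t_mem C
      by (intro squared_top_welfare_le) (auto intro: in_simplex_nonneg in_simplex_le_one)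
    also have "(\<Sum>v\<in>V. UW d V vote (t v)) = n * E"
      unfolding E_def n_def t_def using V by (simp add: expectation_f_RD)
    finally show ?thesis .
  qed
  have "0 < E" "W \<le> real d ^ 2 * E"
    using le_sq_mult_of_sq_le[OF n_pos _ n_le W_sq_le] d_pos by auto
  then show ?thesis
    using opt_le unfolding distortion_def E_def[symmetric] by (simp add: pos_divide_le_eq)
qed

lemma distortion_le_D_RD:
  "valid_instance d V vote C rk \<Longrightarrow> ereal (distortion d V vote C (f_RD V rk)) \<le> D_RD d"
  unfolding D_RD_def by (rule SUP_upper2[of "(V, vote, C, rk)"]) auto

lemma D_RD_le_dim_squared: "D_RD d \<le> ereal (real d ^ 2)"
  unfolding D_RD_def by (intro SUP_least) (auto intro: distortion_f_RD_le_dim_squared)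

definition unit_vec :: "nat \<Rightarrow> nat \<Rightarrow> real" where
  "unit_vec k i = (if i = k then 1 else 0)"

lemma ip_unit_vec: "k < d \<Longrightarrow> ip d x (unit_vec k) = x k"
  unfolding ip_def unit_vec_def by (simp add: if_distrib cong: if_cong)

lemma unit_vec_in_simplex: "k < d \<Longrightarrow> in_simplex d (unit_vec k)"
  unfolding in_simplex_def unit_vec_def by simp

lemma inj_unit_vec: "inj unit_vec"
proof (rule injI)
  fix k l assume "unit_vec k = unit_vec l"
  then have "unit_vec k k = unit_vec l k" by simp
  then show "k = l" unfolding unit_vec_def by (simp split: if_splits)
qed

lemma in_cone_unit_vecs:
  assumes "\<forall>i<d. 0 \<le> x i"
  shows "in_cone d (unit_vec ` {..<d}) x"
  unfolding in_cone_def
proof (intro exI[of _ "ip d x"] conjI ballI allI impI)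
  fix c assume "c \<in> unit_vec ` {..<d}"
  then show "0 \<le> ip d x c"
    using assms by (auto simp: ip_unit_vec)
next
  fix i assume "i < d"
  have "(\<Sum>c\<in>unit_vec ` {..<d}. ip d x c * c i) = (\<Sum>k<d. x k * unit_vec k i)"
    using inj_unit_vec by (simp add: sum.reindex inj_on_def ip_unit_vec)
  also have "\<dots> = x i"
    using \<open>i < d\<close> unfolding unit_vec_def by (simp add: if_distrib cong: if_cong)
  finally show "x i = (\<Sum>c\<in>unit_vec ` {..<d}. ip d x c * c i)" by simp
qed

definition tie_vote :: "nat \<Rightarrow> nat \<Rightarrow> real" where
  "tie_vote j i = (unit_vec 0 i + unit_vec j i) / 2"

definition tie_ranking :: "nat \<Rightarrow> nat \<Rightarrow> (nat \<Rightarrow> real) list" where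
  "tie_ranking d j =
     (SOME r. consistent_ranking d (tie_vote j) (unit_vec ` {..<d}) r \<and> hd r = unit_vec j)"

lemma tie_vote_in_simplex:
  assumes "j \<in> {1..<d}"
  shows "in_simplex d (tie_vote j)"
proof -
  have "(\<Sum>i<d. tie_vote j i) = ((\<Sum>i<d. unit_vec 0 i) + (\<Sum>i<d. unit_vec j i)) / 2"
    unfolding tie_vote_def by (simp add: sum.distrib flip: sum_divide_distrib)
  also have "\<dots> = 1"
    using assms unfolding unit_vec_def by simp
  finally show ?thesis
    using assms unfolding in_simplex_def tie_vote_def unit_vec_def by simp
qed

lemma tie_ranking:
  assumes "j \<in> {1..<d}"
  shows "consistent_ranking d (tie_vote j) (unit_vec ` {..<d}) (tie_ranking d j)"
    and "hd (tie_ranking d j) = unit_vec j"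
proof -
  have "\<exists>r. consistent_ranking d (tie_vote j) (unit_vec ` {..<d}) r \<and> hd r = unit_vec j"
  proof (rule consistent_ranking_with_hd_exists)
    show "finite (unit_vec ` {..<d})" "unit_vec j \<in> unit_vec ` {..<d}"
      using assms by auto
    fix c assume "c \<in> unit_vec ` {..<d}"
    then show "ip d (tie_vote j) c \<le> ip d (tie_vote j) (unit_vec j)"
      using assms by (auto simp: ip_unit_vec tie_vote_def unit_vec_def)
  qed
  then have "consistent_ranking d (tie_vote j) (unit_vec ` {..<d}) (tie_ranking d j) \<and>
      hd (tie_ranking d j) = unit_vec j"
    unfolding tie_ranking_def by (rule someI_ex)
  then show "consistent_ranking d (tie_vote j) (unit_vec ` {..<d}) (tie_ranking d j)"
    and "hd (tie_ranking d j) = unit_vec j"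
    by auto
qed

lemma valid_tie_instance:
  assumes "2 \<le> d"
  shows "valid_instance d {1..<d} tie_vote (unit_vec ` {..<d}) (tie_ranking d)"
  using assms unfolding valid_instance_def
  by (auto simp: unit_vec_in_simplex tie_vote_in_simplex tie_ranking lessThan_empty_iff
      intro!: in_cone_unit_vecs simp: tie_vote_def unit_vec_def)

lemma UW_tie_unit_vec_0:
  assumes "0 < d"
  shows "UW d {1..<d} tie_vote (unit_vec 0) = (real d - 1) / 2"
proof -
  have "UW d {1..<d} tie_vote (unit_vec 0) = (\<Sum>j\<in>{1..<d}. 1 / 2)"
    unfolding UW_def using assms by (intro sum.cong) (auto simp: ip_unit_vec tie_vote_def unit_vec_def)
  then show ?thesis
    using assms by (simp add: of_nat_diff)
qed

lemma UW_tie_unit_vec: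
  assumes "j \<in> {1..<d}"
  shows "UW d {1..<d} tie_vote (unit_vec j) = 1 / 2"
proof -
  have "UW d {1..<d} tie_vote (unit_vec j) = (\<Sum>j'\<in>{1..<d}. if j' = j then 1 / 2 else 0)"
    unfolding UW_def using assms by (intro sum.cong) (auto simp: ip_unit_vec tie_vote_def unit_vec_def)
  then show ?thesis
    using assms by simp
qed

lemma distortion_tie_instance_ge:
  assumes "2 \<le> d"
  shows "real d - 1 \<le>
    distortion d {1..<d} tie_vote (unit_vec ` {..<d}) (f_RD {1..<d} (tie_ranking d))"
proof -
  have "(\<Sum>j\<in>{1..<d}. UW d {1..<d} tie_vote (hd (tie_ranking d j))) = (\<Sum>j\<in>{1..<d}. 1 / 2)"
    by (intro sum.cong refl) (metis UW_tie_unit_vec tie_ranking(2))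
  then have E_eq:
    "measure_pmf.expectation (f_RD {1..<d} (tie_ranking d)) (UW d {1..<d} tie_vote) = 1 / 2"
    using assms by (simp add: expectation_f_RD)
  define opt where "opt = (MAX c\<in>unit_vec ` {..<d}. UW d {1..<d} tie_vote c)"
  have "(real d - 1) / 2 = UW d {1..<d} tie_vote (unit_vec 0)"
    using assms by (intro UW_tie_unit_vec_0[symmetric]) simp
  also have "\<dots> \<le> opt"
    unfolding opt_def using assms by (intro Max_ge finite_imageI imageI) auto
  finally show ?thesis
    unfolding distortion_def E_eq opt_def[symmetric] by simp
qed

lemma D_RD_ge_dim_minus_one: "2 \<le> d \<Longrightarrow> ereal (real d - 1) \<le> D_RD d"
  using distortion_tie_instance_ge distortion_le_D_RD[OF valid_tie_instance]
  by (meson ereal_less_eq(3) order_trans)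

theorem theorem7:
  shows "(\<exists>c1>0. \<exists>N. \<forall>d\<ge>N. ereal (c1 * real d) \<le> D_RD d) \<and>
         (\<exists>c2>0. \<exists>N. \<forall>d\<ge>N. D_RD d \<le> ereal (c2 * real d ^ 3))"
proof (intro conjI)
  have "ereal (1 / 2 * real d) \<le> D_RD d" if "2 \<le> d" for d
  proof -
    have "ereal (1 / 2 * real d) \<le> ereal (real d - 1)"
      using that by simp
    then show ?thesis
      using D_RD_ge_dim_minus_one[OF that] by (rule order_trans)
  qed
  then show "\<exists>c1>0. \<exists>N. \<forall>d\<ge>N. ereal (c1 * real d) \<le> D_RD d"
    by (intro exI[of _ "1 / 2"] conjI exI[of _ 2]) auto
  have "D_RD d \<le> ereal (1 * real d ^ 3)" for d
  proof -
    have "real d ^ 2 \<le> real d ^ 3"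
      by (cases "d = 0") (auto intro: power_increasing)
    then show ?thesis
      using D_RD_le_dim_squared[of d] by (simp add: order_trans)
  qed
  then show "\<exists>c2>0. \<exists>N. \<forall>d\<ge>N. D_RD d \<le> ereal (c2 * real d ^ 3)"
    by (intro exI[of _ 1] conjI) auto
qed

end
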